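(* Let $(\alpha_1,\alpha_2)\in\mathbb{C}^2$ and $p_1,p_2\in\mathbb{C}[u]\setminus\{0\}$. (i) $\mathcal{A}_{\alpha_1,\alpha_2}(p_1,p_2)\simeq\mathcal{A}_{\alpha_2,\alpha_1}(p_2,p_1)$. (ii) If $\psi(u)=\gamma u+\gamma_0$ with $\gamma\in\mathbb{C}\setminus\{0\}$ and $\gamma_0\in\mathbb{C}$, then $\mathcal{A}_{\alpha_1,\alpha_2}(p_1\circ\psi,p_2\circ\psi)\simeq\mathcal{A}_{\gamma\alpha_1,\gamma\alpha_2}(p_1,p_2)$.
   Context: $\tilde{\mathcal{A}}_{\alpha_1,\alpha_2}(p_1,p_2)$ is the $\mathbb{C}$-algebra generated by $H,X_1^\pm,X_2^\pm$ with relations ($i=1,2$) $HX_i^\pm-X_i^\pm H=\pm\alpha_iX_i^\pm$, $X_i^+X_i^-=p_i(H-\alpha_i/2)$, $X_i^-X_i^+=p_i(H+\alpha_i/2)$, $X_1^+X_2^-=X_2^-X_1^+$, $X_1^-X_2^+=X_2^+X_1^-$; the noncommutative Kleinian fiber product $\mathcal{A}_{\alpha_1,\alpha_2}(p_1,p_2)$ is its quotient by the ideal of all $a$ with $f(H)a=0$ for some nonzero polynomial $f$. *)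

theory Defs
  imports "HOL-Algebra.QuotRing" "HOL-Computational_Algebra.Polynomial" "HOL-Library.Poly_Mapping"
begin

datatype gen = GH | GXp1 | GXm1 | GXp2 | GXm2

datatype word = Word "gen list"

instantiation word :: monoid_add
begin
definition zero_word :: word where "zero_word = Word []"
fun plus_word :: "word \<Rightarrow> word \<Rightarrow> word" where
  "plus_word (Word a) (Word b) = Word (a @ b)"
instance
proof
  fix a b c :: word
  show "a + b + c = a + (b + c)" by (cases a; cases b; cases c) simp
  show "0 + a = a" by (cases a) (simp add: zero_word_def)
  show "a + 0 = a" by (cases a) (simp add: zero_word_def)
qed
end

text \<open>The free algebra C<H,X1+,X1-,X2+,X2->: finitely supported functions words -> C
  with convolution product (a ring_1 by Poly_Mapping).\<close>
type_synonym freealg = "word \<Rightarrow>\<^sub>0 complex"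

definition FR :: "freealg ring" where
  "FR = \<lparr>carrier = UNIV, Group.monoid.mult = (*), one = 1, zero = 0, add = (+)\<rparr>"

definition gen_el :: "gen \<Rightarrow> freealg" where
  "gen_el g = Poly_Mapping.single (Word [g]) 1"

definition embC :: "complex \<Rightarrow> freealg" where
  "embC c = Poly_Mapping.single 0 c"

definition peval :: "complex poly \<Rightarrow> freealg \<Rightarrow> freealg" where
  "peval p x = (\<Sum>i\<le>degree p. embC (coeff p i) * x ^ i)"

abbreviation "Hg \<equiv> gen_el GH"

text \<open>Defining relations of the algebra tilde-A_{a1,a2}(p1,p2), written as elements r (meaning r = 0).\<close>
definition rels :: "complex \<Rightarrow> complex \<Rightarrow> complex poly \<Rightarrow> complex poly \<Rightarrow> freealg set" where
  "rels a1 a2 p1 p2 =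
    (\<Union>(a, p, Xp, Xm) \<in> {(a1, p1, gen_el GXp1, gen_el GXm1), (a2, p2, gen_el GXp2, gen_el GXm2)}.
       { Hg * Xp - Xp * Hg - embC a * Xp,
         Hg * Xm - Xm * Hg + embC a * Xm,
         Xp * Xm - peval p (Hg - embC (a / 2)),
         Xm * Xp - peval p (Hg + embC (a / 2)) })
    \<union> { gen_el GXp1 * gen_el GXm2 - gen_el GXm2 * gen_el GXp1,
        gen_el GXm1 * gen_el GXp2 - gen_el GXp2 * gen_el GXm1 }"

definition relideal :: "complex \<Rightarrow> complex \<Rightarrow> complex poly \<Rightarrow> complex poly \<Rightarrow> freealg set" where
  "relideal a1 a2 p1 p2 = genideal FR (rels a1 a2 p1 p2)"

text \<open>Preimage in the free algebra of the ideal of H-torsion elements of tilde-A: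
  all a with f(H) a = 0 in tilde-A for some nonzero polynomial f (taken as the ideal
  generated by these elements, which equals this set since the paper asserts it is an ideal).\<close>
definition torsideal :: "complex \<Rightarrow> complex \<Rightarrow> complex poly \<Rightarrow> complex poly \<Rightarrow> freealg set" where
  "torsideal a1 a2 p1 p2 =
     genideal FR {a. \<exists>f. f \<noteq> 0 \<and> peval f Hg * a \<in> relideal a1 a2 p1 p2}"

definition KFP :: "complex \<Rightarrow> complex \<Rightarrow> complex poly \<Rightarrow> complex poly \<Rightarrow> freealg set ring" where
  "KFP a1 a2 p1 p2 = FR Quot torsideal a1 a2 p1 p2"

text \<open>Isomorphism of C-algebras between quotients F/I and F/J of the free algebra:
  a ring isomorphism that is the identity on scalars (hence C-linear).\<close>
definition alg_iso_quot :: "freealg set \<Rightarrow> freealg set \<Rightarrow> bool" where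
  "alg_iso_quot I J \<longleftrightarrow>
     (\<exists>\<phi> \<in> ring_iso (FR Quot I) (FR Quot J).
        \<forall>c. \<phi> (I +>\<^bsub>FR\<^esub> embC c) = J +>\<^bsub>FR\<^esub> embC c)"

end

theory Submission
  imports Defs
begin

text \<open>Both isomorphisms are induced by automorphisms of the free algebra: for (i) the one
  exchanging the indices 1 and 2, for (ii) the one fixing the generators \<open>X\<^sub>i\<^sup>\<plusminus>\<close> and sending
  \<open>H\<close> to \<open>\<gamma>\<^sup>-\<^sup>1 (H - \<gamma>\<^sub>0)\<close>. Each maps the defining relations into the ideal generated by the
  relations of the target algebra (up to invertible scalars), and maps \<open>H\<close> to a
  nonconstant polynomial in \<open>H\<close>; the latter turns \<open>H\<close>-torsion into \<open>H\<close>-torsion, so the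
  automorphism also identifies the torsion ideals and descends to the quotients.\<close>

lemma freealg_induct [case_names zero single add]:
  assumes "P 0" "\<And>w c. P (Poly_Mapping.single w c)" "\<And>f g. P f \<Longrightarrow> P g \<Longrightarrow> P (f + g)"
  shows "P (f :: freealg)"
proof -
  have "P (\<Sum>w\<in>A. Poly_Mapping.single w (Poly_Mapping.lookup f w))" if "finite A" for A
    using that by (induction A rule: finite_induct) (auto intro: assms)
  moreover have "f = (\<Sum>w\<in>Poly_Mapping.keys f. Poly_Mapping.single w (Poly_Mapping.lookup f w))"
    by (rule poly_mapping_eqI) (auto simp: lookup_sum lookup_single when_def in_keys_iff)
  ultimately show ?thesis by (metis finite_keys)
qed

lemma embC_0 [simp]: "embC 0 = 0" by (simp add: embC_def)
lemma embC_1 [simp]: "embC 1 = 1" by (simp add: embC_def)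
lemma embC_add: "embC (a + b) = embC a + embC b" by (simp add: embC_def single_add)
lemma embC_uminus: "embC (- b) = - embC b" by (simp add: embC_def single_uminus)
lemma embC_mult: "embC (a * b) = embC a * embC b" by (simp add: embC_def mult_single)

lemma embC_commute: "embC c * x = x * embC c"
proof (induction x rule: freealg_induct)
  case (add f g) then show ?case by (simp add: algebra_simps)
qed (simp_all add: embC_def mult_single mult.commute)

lemma embC_left_commute: "x * (embC c * y) = embC c * (x * y)"
  by (metis embC_commute mult.assoc)

lemma single_Word: "Poly_Mapping.single (Word gs) c = embC c * prod_list (map gen_el gs)"
proof (induction gs arbitrary: c)
  case Nil then show ?case by (simp add: embC_def flip: zero_word_def)
next
  case (Cons g gs)
  have "Poly_Mapping.single (Word (g # gs)) c = gen_el g * Poly_Mapping.single (Word gs) c"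
    by (simp add: gen_el_def mult_single)
  then show ?case
    using Cons by (simp add: embC_left_commute)
qed

subsection \<open>Algebra endomorphisms and substitution\<close>

definition alg_endo :: "(freealg \<Rightarrow> freealg) \<Rightarrow> bool" where
  "alg_endo h \<longleftrightarrow> (\<forall>x y. h (x + y) = h x + h y) \<and> (\<forall>x y. h (x * y) = h x * h y) \<and>
     (\<forall>c. h (embC c) = embC c)"

context
  fixes h assumes h: "alg_endo h"
begin

lemma alg_endo_add: "h (x + y) = h x + h y" using h by (simp add: alg_endo_def)
lemma alg_endo_mult: "h (x * y) = h x * h y" using h by (simp add: alg_endo_def)
lemma alg_endo_embC: "h (embC c) = embC c" using h by (simp add: alg_endo_def)
lemma alg_endo_0: "h 0 = 0" using alg_endo_embC[of 0] by simp
lemma alg_endo_1: "h 1 = 1" using alg_endo_embC[of 1] by simp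
lemma alg_endo_uminus: "h (- x) = - h x"
  using alg_endo_add[of x "- x"] by (simp add: alg_endo_0 add_eq_0_iff)
lemma alg_endo_diff: "h (x - y) = h x - h y"
  using alg_endo_add[of x "- y"] by (simp add: alg_endo_uminus)
lemma alg_endo_sum: "h (sum f A) = (\<Sum>a\<in>A. h (f a))"
  by (induction A rule: infinite_finite_induct) (simp_all add: alg_endo_0 alg_endo_add)
lemma alg_endo_prod_list: "h (prod_list xs) = prod_list (map h xs)"
  by (induction xs) (simp_all add: alg_endo_1 alg_endo_mult)
lemma alg_endo_power: "h (x ^ n) = h x ^ n"
  by (induction n) (simp_all add: alg_endo_1 alg_endo_mult)

lemmas alg_endo_simps =
  alg_endo_add alg_endo_mult alg_endo_embC alg_endo_uminus alg_endo_diff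

end

lemma alg_endo_comp: "alg_endo f \<Longrightarrow> alg_endo g \<Longrightarrow> alg_endo (f \<circ> g)"
  by (simp add: alg_endo_def)

lemma alg_endo_id: "alg_endo id"
  by (simp add: alg_endo_def)

lemma alg_endo_eqI:
  assumes "alg_endo f" "alg_endo g" "\<And>x. f (gen_el x) = g (gen_el x)"
  shows "f = g"
proof
  fix y show "f y = g y"
  proof (induction y rule: freealg_induct)
    case (single w c)
    obtain gs where "w = Word gs" by (cases w)
    then show ?case
      using assms by (simp add: single_Word alg_endo_mult alg_endo_embC alg_endo_prod_list comp_def)
  qed (use assms in \<open>simp_all add: alg_endo_0 alg_endo_add\<close>)
qed

fun word_eval :: "(gen \<Rightarrow> freealg) \<Rightarrow> word \<Rightarrow> freealg" where
  "word_eval s (Word gs) = prod_list (map s gs)"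

lemma word_eval_plus: "word_eval s (v + w) = word_eval s v * word_eval s w"
  by (cases v; cases w) simp

definition free_subst :: "(gen \<Rightarrow> freealg) \<Rightarrow> freealg \<Rightarrow> freealg" where
  "free_subst s f = (\<Sum>w\<in>Poly_Mapping.keys f. embC (Poly_Mapping.lookup f w) * word_eval s w)"

lemma free_subst_superset:
  "finite S \<Longrightarrow> Poly_Mapping.keys f \<subseteq> S \<Longrightarrow>
   free_subst s f = (\<Sum>w\<in>S. embC (Poly_Mapping.lookup f w) * word_eval s w)"
  unfolding free_subst_def by (rule sum.mono_neutral_left) (auto simp: in_keys_iff)

lemma free_subst_add: "free_subst s (f + g) = free_subst s f + free_subst s g"
proof -
  let ?S = "Poly_Mapping.keys f \<union> Poly_Mapping.keys g"
  have "free_subst s (f + g) = (\<Sum>w\<in>?S. embC (Poly_Mapping.lookup (f + g) w) * word_eval s w)"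
    by (rule free_subst_superset) (auto simp: keys_add)
  also have "\<dots> = free_subst s f + free_subst s g"
    using free_subst_superset[of ?S f s] free_subst_superset[of ?S g s]
    by (simp add: lookup_add embC_add algebra_simps sum.distrib)
  finally show ?thesis .
qed

lemma free_subst_single: "free_subst s (Poly_Mapping.single w c) = embC c * word_eval s w"
  by (cases "c = 0") (simp_all add: free_subst_def)

lemma free_subst_mult: "free_subst s (f * g) = free_subst s f * free_subst s g"
proof (induction f arbitrary: g rule: freealg_induct)
  case (single v c)
  show ?case
  proof (induction g rule: freealg_induct)
    case (single w d)
    have "embC (c * d) * word_eval s (v + w) = embC c * word_eval s v * (embC d * word_eval s w)"
      by (simp add: embC_mult word_eval_plus mult.assoc) (metis embC_left_commute)
    then show ?case by (simp add: mult_single free_subst_single)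
  next
    case (add g1 g2) then show ?case by (simp add: distrib_left free_subst_add)
  qed (simp add: free_subst_def)
next
  case (add f1 f2) then show ?case by (simp add: distrib_right free_subst_add)
qed (simp add: free_subst_def)

lemma free_subst_gen_el [simp]: "free_subst s (gen_el g) = s g"
  by (simp add: gen_el_def free_subst_single)

lemma alg_endo_free_subst: "alg_endo (free_subst s)"
  by (simp add: alg_endo_def free_subst_add free_subst_mult embC_def free_subst_single zero_word_def)

lemma peval_superset: "degree p \<le> n \<Longrightarrow> peval p x = (\<Sum>i\<le>n. embC (coeff p i) * x ^ i)"
  unfolding peval_def by (rule sum.mono_neutral_left) (auto simp: coeff_eq_0)

lemma peval_0 [simp]: "peval 0 x = 0"
  by (simp add: peval_def)

lemma peval_pCons: "peval (pCons a p) x = embC a + x * peval p x"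
proof -
  have "peval (pCons a p) x = (\<Sum>i\<le>Suc (degree p). embC (coeff (pCons a p) i) * x ^ i)"
    by (rule peval_superset) (simp add: degree_pCons_le)
  also have "\<dots> = embC a + (\<Sum>i\<le>degree p. embC (coeff p i) * x ^ Suc i)"
    by (subst sum.atMost_Suc_shift) (simp del: sum.atMost_Suc)
  also have "(\<Sum>i\<le>degree p. embC (coeff p i) * x ^ Suc i) = x * peval p x"
    unfolding peval_def sum_distrib_left by (simp add: embC_left_commute)
  finally show ?thesis .
qed

lemma peval_add: "peval (p + q) x = peval p x + peval q x"
  by (induction p q rule: poly_induct2) (simp_all add: peval_pCons embC_add algebra_simps)

lemma peval_smult: "peval (smult c p) x = embC c * peval p x"
  by (induction p) (simp_all add: peval_pCons embC_mult distrib_left embC_left_commute)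

lemma peval_mult: "peval (p * q) x = peval p x * peval q x"
  by (induction p) (simp_all add: peval_pCons peval_add peval_smult distrib_right mult.assoc)

lemma peval_pcompose: "peval (p \<circ>\<^sub>p q) x = peval p (peval q x)"
  by (induction p) (simp_all add: pcompose_pCons peval_pCons peval_add peval_mult)

lemma peval_linear: "peval [:c0, c1:] x = embC c1 * x + embC c0"
  by (simp add: peval_pCons embC_commute add.commute)

lemma alg_endo_peval: "alg_endo h \<Longrightarrow> h (peval p x) = peval p (h x)"
  by (simp add: peval_def alg_endo_sum alg_endo_mult alg_endo_embC alg_endo_power)

lemma FR_simps [simp]:
  "carrier FR = UNIV" "Group.monoid.mult FR = (*)" "Group.monoid.one FR = 1"
  "ring.zero FR = 0" "ring.add FR = (+)"
  by (simp_all add: FR_def)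

lemma ring_FR: "ring FR"
proof (rule ringI)
  show "abelian_group FR"
    by (rule abelian_groupI) (auto simp: algebra_simps intro: exI[of _ "- x" for x])
  show "monoid FR"
    by (rule monoidI) (auto simp: algebra_simps)
qed (auto simp: algebra_simps)

lemma FR_a_inv: "a_inv FR x = - x"
proof -
  interpret ring FR by (rule ring_FR)
  show ?thesis by (rule minus_equality) auto
qed

lemma ideal_FR_I:
  assumes "0 \<in> J" "\<And>x y. x \<in> J \<Longrightarrow> y \<in> J \<Longrightarrow> x + y \<in> J"
    "\<And>x y. y \<in> J \<Longrightarrow> x * y \<in> J" "\<And>x y. y \<in> J \<Longrightarrow> y * x \<in> J"
  shows "ideal J FR"
proof (rule idealI[OF ring_FR])
  interpret ring FR by (rule ring_FR)
  have "- y \<in> J" if "y \<in> J" for y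
    using assms(3)[OF that, of "- 1"] by simp
  then show "subgroup J (add_monoid FR)"
    using assms(1,2) by (intro add.subgroupI) (auto simp: FR_a_inv)
qed (use assms in auto)

context
  fixes J assumes J: "ideal J FR"
begin

lemma ideal_FR_0: "0 \<in> J"
  using additive_subgroup.zero_closed[OF ideal.axioms(1)[OF J]] by simp

lemma ideal_FR_add: "x \<in> J \<Longrightarrow> y \<in> J \<Longrightarrow> x + y \<in> J"
  using additive_subgroup.a_closed[OF ideal.axioms(1)[OF J]] by simp

lemma ideal_FR_mult_left: "y \<in> J \<Longrightarrow> x * y \<in> J"
  using ideal.I_l_closed[OF J, of y x] by simp

lemma ideal_FR_mult_right: "y \<in> J \<Longrightarrow> y * x \<in> J"
  using ideal.I_r_closed[OF J, of y x] by simp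

end

lemma genideal_FR_ideal: "ideal (genideal FR S) FR"
  using ring.genideal_ideal[OF ring_FR, of S] by simp

lemma genideal_FR_self: "S \<subseteq> genideal FR S"
  using ring.genideal_self[OF ring_FR, of S] by simp

lemma genideal_FR_minimal: "ideal J FR \<Longrightarrow> S \<subseteq> J \<Longrightarrow> genideal FR S \<subseteq> J"
  unfolding genideal_def by auto

lemma embC_mult_genideal: "r \<in> S \<Longrightarrow> embC c * r \<in> genideal FR S"
  using ideal_FR_mult_left[OF genideal_FR_ideal] genideal_FR_self by blast

lemma uminus_genideal: "r \<in> S \<Longrightarrow> - r \<in> genideal FR S"
  using embC_mult_genideal[of r S "- 1"] by (simp add: embC_uminus)

lemma alg_endo_image_genideal:
  assumes h: "alg_endo h" and J: "ideal J FR" and S: "h ` S \<subseteq> J"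
  shows "h ` genideal FR S \<subseteq> J"
proof -
  have "ideal {x. h x \<in> J} FR"
    by (rule ideal_FR_I)
       (simp_all add: alg_endo_0[OF h] alg_endo_add[OF h] alg_endo_mult[OF h] ideal_FR_0[OF J]
         ideal_FR_add[OF J] ideal_FR_mult_left[OF J] ideal_FR_mult_right[OF J])
  then have "genideal FR S \<subseteq> {x. h x \<in> J}"
    using S by (intro genideal_FR_minimal) auto
  then show ?thesis by auto
qed

lemma FR_coset: "I +>\<^bsub>FR\<^esub> x = (\<lambda>i. i + x) ` I"
  by (auto simp: a_r_coset_def r_coset_def)

lemma Quot_FR_simps:
  "carrier (FR Quot I) = range (\<lambda>x. (\<lambda>i. i + x) ` I)"
  "Group.monoid.mult (FR Quot I) A B = (\<Union>a\<in>A. \<Union>b\<in>B. (\<lambda>i. i + a * b) ` I)"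
  "ring.add (FR Quot I) A B = (\<Union>a\<in>A. \<Union>b\<in>B. {a + b})"
  "Group.monoid.one (FR Quot I) = (\<lambda>i. i + 1) ` I"
  by (auto simp: FactRing_def A_RCOSETS_def RCOSETS_def r_coset_def rcoset_mult_def
      set_add_def set_mult_def FR_coset)

lemma alg_iso_quotI:
  assumes \<phi>: "alg_endo \<phi>" and \<psi>: "alg_endo \<psi>"
    and inv: "\<And>x. \<psi> (\<phi> x) = x" "\<And>x. \<phi> (\<psi> x) = x"
    and IJ: "\<phi> ` I = J"
  shows "alg_iso_quot I J"
proof -
  have JI: "\<psi> ` J = I"
    using IJ inv by (auto simp: image_comp image_iff)
  have coset: "\<phi> ` ((\<lambda>i. i + x) ` I) = (\<lambda>j. j + \<phi> x) ` J" for x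
    using IJ by (auto simp: image_comp comp_def alg_endo_add[OF \<phi>])
  have coset': "\<psi> ` ((\<lambda>j. j + x) ` J) = (\<lambda>i. i + \<psi> x) ` I" for x
    using JI by (auto simp: image_comp comp_def alg_endo_add[OF \<psi>])
  have "bij_betw ((`) \<phi>) (carrier (FR Quot I)) (carrier (FR Quot J))"
    by (rule bij_betw_byWitness[where f' = "(`) \<psi>"])
       (simp_all add: image_comp inv, auto simp: Quot_FR_simps coset coset')
  then have "(`) \<phi> \<in> ring_iso (FR Quot I) (FR Quot J)"
    by (intro ring_iso_memI)
       (auto simp: Quot_FR_simps image_UN coset alg_endo_mult[OF \<phi>] alg_endo_add[OF \<phi>]
         alg_endo_1[OF \<phi>])
  moreover have "\<phi> ` (I +>\<^bsub>FR\<^esub> embC c) = J +>\<^bsub>FR\<^esub> embC c" for c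
    by (simp add: FR_coset coset alg_endo_embC[OF \<phi>])
  ultimately show ?thesis
    unfolding alg_iso_quot_def by blast
qed

subsection \<open>Torsion ideals\<close>

definition H_torsion :: "freealg set \<Rightarrow> freealg set" where
  "H_torsion S = {a. \<exists>f. f \<noteq> 0 \<and> peval f Hg * a \<in> genideal FR S}"

lemma torsideal_eq: "torsideal a1 a2 p1 p2 = genideal FR (H_torsion (rels a1 a2 p1 p2))"
  by (simp add: torsideal_def relideal_def H_torsion_def)

lemma alg_endo_image_torsion_ideal:
  assumes h: "alg_endo h" and S: "h ` S \<subseteq> genideal FR T"
    and q: "h Hg = peval q Hg" "degree q > 0"
  shows "h ` genideal FR (H_torsion S) \<subseteq> genideal FR (H_torsion T)"
proof (rule alg_endo_image_genideal[OF h genideal_FR_ideal])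
  have "h ` H_torsion S \<subseteq> H_torsion T"
  proof
    fix b assume "b \<in> h ` H_torsion S"
    then obtain a f where b: "b = h a" and f: "f \<noteq> 0" "peval f Hg * a \<in> genideal FR S"
      by (auto simp: H_torsion_def)
    have "h (peval f Hg * a) = peval (f \<circ>\<^sub>p q) Hg * b"
      by (simp add: alg_endo_mult[OF h] alg_endo_peval[OF h] q peval_pcompose b)
    moreover have "h (peval f Hg * a) \<in> genideal FR T"
      using alg_endo_image_genideal[OF h genideal_FR_ideal S] f by blast
    moreover have "f \<circ>\<^sub>p q \<noteq> 0"
      using f q pcompose_eq_0 by blast
    ultimately show "b \<in> H_torsion T"
      unfolding H_torsion_def by auto
  qed
  then show "h ` H_torsion S \<subseteq> genideal FR (H_torsion T)"
    using genideal_FR_self by blast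
qed

lemma alg_iso_quot_torsion_ideals:
  assumes \<phi>: "alg_endo \<phi>" and \<psi>: "alg_endo \<psi>"
    and inv: "\<And>x. \<psi> (\<phi> x) = x" "\<And>x. \<phi> (\<psi> x) = x"
    and rels: "\<phi> ` S \<subseteq> genideal FR T" "\<psi> ` T \<subseteq> genideal FR S"
    and q: "\<phi> Hg = peval q Hg" "degree q > 0" "\<psi> Hg = peval q' Hg" "degree q' > 0"
  shows "alg_iso_quot (genideal FR (H_torsion S)) (genideal FR (H_torsion T))"
proof (rule alg_iso_quotI[OF \<phi> \<psi> inv])
  have "genideal FR (H_torsion T) \<subseteq> \<phi> ` genideal FR (H_torsion S)"
  proof
    fix x assume "x \<in> genideal FR (H_torsion T)"
    then have "\<psi> x \<in> genideal FR (H_torsion S)"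
      using alg_endo_image_torsion_ideal[OF \<psi> rels(2) q(3,4)] by blast
    then show "x \<in> \<phi> ` genideal FR (H_torsion S)"
      by (rule image_eqI[where f = \<phi>, OF inv(2)[of x, symmetric]])
  qed
  then show "\<phi> ` genideal FR (H_torsion S) = genideal FR (H_torsion T)"
    using alg_endo_image_torsion_ideal[OF \<phi> rels(1) q(1,2)] by blast
qed

abbreviation "X1p \<equiv> gen_el GXp1"
abbreviation "X1m \<equiv> gen_el GXm1"
abbreviation "X2p \<equiv> gen_el GXp2"
abbreviation "X2m \<equiv> gen_el GXm2"

lemma rels_explicit: "rels a1 a2 p1 p2 =
  {Hg * X1p - X1p * Hg - embC a1 * X1p, Hg * X1m - X1m * Hg + embC a1 * X1m,
   X1p * X1m - peval p1 (Hg - embC (a1 / 2)), X1m * X1p - peval p1 (Hg + embC (a1 / 2)),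
   Hg * X2p - X2p * Hg - embC a2 * X2p, Hg * X2m - X2m * Hg + embC a2 * X2m,
   X2p * X2m - peval p2 (Hg - embC (a2 / 2)), X2m * X2p - peval p2 (Hg + embC (a2 / 2)),
   X1p * X2m - X2m * X1p, X1m * X2p - X2p * X1m}"
  unfolding rels_def by auto

subsection \<open>Exchanging the two indices\<close>

fun swap_index :: "gen \<Rightarrow> gen" where
  "swap_index GH = GH" | "swap_index GXp1 = GXp2" | "swap_index GXm1 = GXm2"
| "swap_index GXp2 = GXp1" | "swap_index GXm2 = GXm1"

definition swap_indices :: "freealg \<Rightarrow> freealg" where
  "swap_indices = free_subst (gen_el \<circ> swap_index)"

lemma swap_indices_gen_el [simp]: "swap_indices (gen_el g) = gen_el (swap_index g)"
  by (simp add: swap_indices_def)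

lemma alg_endo_swap_indices: "alg_endo swap_indices"
  by (simp add: swap_indices_def alg_endo_free_subst)

lemma swap_indices_involution: "swap_indices (swap_indices x) = x"
proof -
  have "swap_indices \<circ> swap_indices = id"
  proof (rule alg_endo_eqI)
    show "(swap_indices \<circ> swap_indices) (gen_el g) = id (gen_el g)" for g
      by (cases g) simp_all
  qed (simp_all add: alg_endo_comp alg_endo_swap_indices alg_endo_id)
  then show ?thesis by (metis comp_apply id_apply)
qed

lemma swap_indices_rels: "swap_indices ` rels a1 a2 p1 p2 \<subseteq> genideal FR (rels a2 a1 p2 p1)"
proof -
  let ?G = "genideal FR (rels a2 a1 p2 p1)"
  have self: "r \<in> rels a2 a1 p2 p1 \<Longrightarrow> r \<in> ?G" for r
    using genideal_FR_self by blast
  have "X2p * X1m - X1m * X2p \<in> ?G" "X2m * X1p - X1p * X2m \<in> ?G"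
    using uminus_genideal[of "X1m * X2p - X2p * X1m"] uminus_genideal[of "X1p * X2m - X2m * X1p"]
    by (simp_all add: rels_explicit)
  then show ?thesis
    unfolding rels_explicit[of a1 a2 p1 p2]
    by (simp add: alg_endo_simps[OF alg_endo_swap_indices] alg_endo_peval[OF alg_endo_swap_indices])
       (intro conjI; rule self; simp add: rels_explicit)
qed

lemma alg_iso_quot_swap_indices:
  "alg_iso_quot (torsideal a1 a2 p1 p2) (torsideal a2 a1 p2 p1)"
  unfolding torsideal_eq
  by (rule alg_iso_quot_torsion_ideals[where q = "[:0, 1:]" and q' = "[:0, 1:]",
        OF alg_endo_swap_indices alg_endo_swap_indices swap_indices_involution
        swap_indices_involution swap_indices_rels swap_indices_rels])
     (simp_all add: peval_linear)

subsection \<open>Substitutions in \<open>H\<close>\<close>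

definition H_subst :: "complex poly \<Rightarrow> freealg \<Rightarrow> freealg" where
  "H_subst q = free_subst (\<lambda>g. if g = GH then peval q Hg else gen_el g)"

lemma alg_endo_H_subst: "alg_endo (H_subst q)"
  by (simp add: H_subst_def alg_endo_free_subst)

lemma H_subst_H [simp]: "H_subst q Hg = peval q Hg"
  by (simp add: H_subst_def)

lemma H_subst_gen_el [simp]: "g \<noteq> GH \<Longrightarrow> H_subst q (gen_el g) = gen_el g"
  by (simp add: H_subst_def)

lemma H_subst_H_subst: "H_subst q (H_subst r x) = H_subst (r \<circ>\<^sub>p q) x"
proof -
  have "H_subst q \<circ> H_subst r = H_subst (r \<circ>\<^sub>p q)"
  proof (rule alg_endo_eqI)
    show "(H_subst q \<circ> H_subst r) (gen_el g) = H_subst (r \<circ>\<^sub>p q) (gen_el g)" for g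
      by (cases "g = GH") (simp_all add: alg_endo_peval[OF alg_endo_H_subst] peval_pcompose)
  qed (simp_all add: alg_endo_comp alg_endo_H_subst)
  then show ?thesis by (metis comp_apply)
qed

lemma H_subst_id: "H_subst [:0, 1:] x = x"
proof -
  have "H_subst [:0, 1:] = id"
  proof (rule alg_endo_eqI)
    show "H_subst [:0, 1:] (gen_el g) = id (gen_el g)" for g
      by (cases "g = GH") (simp_all add: peval_linear)
  qed (simp_all add: alg_endo_H_subst alg_endo_id)
  then show ?thesis by simp
qed

lemma pcompose_linear: "[:d, c:] \<circ>\<^sub>p [:d', c':] = [:d + c * d', c * c':]"
  by (simp add: pcompose_pCons algebra_simps)

lemma H_subst_linear_rels:
  assumes c: "c \<noteq> 0"
  shows "H_subst [:d, c:] ` rels a1 a2 p1 p2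
    \<subseteq> genideal FR (rels (a1 / c) (a2 / c) (p1 \<circ>\<^sub>p [:d, c:]) (p2 \<circ>\<^sub>p [:d, c:]))"
proof -
  let ?h = "H_subst [:d, c:]"
  let ?R = "rels (a1 / c) (a2 / c) (p1 \<circ>\<^sub>p [:d, c:]) (p2 \<circ>\<^sub>p [:d, c:])"
  note h = alg_endo_simps[OF alg_endo_H_subst] alg_endo_peval[OF alg_endo_H_subst]
  have rel_plus: "?h (Hg * X - X * Hg + embC a * X) = embC c * (Hg * X - X * Hg + embC (a / c) * X)"
    if "?h X = X" for X a
  proof -
    have "?h (Hg * X - X * Hg) = embC c * (Hg * X - X * Hg)"
      using that by (simp add: h peval_linear algebra_simps embC_left_commute embC_commute[of _ X])
    moreover have "embC a = embC c * embC (a / c)"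
      using c by (simp flip: embC_mult)
    ultimately show ?thesis
      using that by (simp add: h algebra_simps)
  qed
  have rel_minus: "?h (Hg * X - X * Hg - embC a * X) = embC c * (Hg * X - X * Hg - embC (a / c) * X)"
    if "?h X = X" for X a
    using rel_plus[OF that, of "- a"] by (simp add: embC_uminus)
  have shift: "?h (Hg + embC b) = peval [:d, c:] (Hg + embC (b / c))" for b
    using c by (simp add: h peval_linear distrib_left embC_mult[symmetric])
  have fixed: "?h (gen_el g) = gen_el g" if "g \<noteq> GH" for g
    using that by simp
  have prod_plus: "?h (X * Y - peval p (Hg + embC (a / 2)))
      = X * Y - peval (p \<circ>\<^sub>p [:d, c:]) (Hg + embC (a / c / 2))"
    and prod_minus: "?h (X * Y - peval p (Hg - embC (a / 2)))
      = X * Y - peval (p \<circ>\<^sub>p [:d, c:]) (Hg - embC (a / c / 2))"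
    if "?h X = X" "?h Y = Y" for X Y p a
    using that shift[of "a / 2"] shift[of "- a / 2"]
    by (simp_all add: h peval_pcompose embC_uminus mult.commute[of 2 c])
  have self: "r \<in> genideal FR ?R" and scaled: "embC c * r \<in> genideal FR ?R" if "r \<in> ?R" for r
    using that genideal_FR_self embC_mult_genideal by blast+
  have cross: "?h (X * Y - Y * X) = X * Y - Y * X" if "?h X = X" "?h Y = Y" for X Y
    using that by (simp add: h)
  show ?thesis
    unfolding rels_explicit[of a1 a2 p1 p2] image_insert image_empty insert_subset
    by (simp only: fixed gen.distinct rel_plus rel_minus prod_plus prod_minus cross simp_thms
        empty_subsetI; intro conjI; (rule scaled | rule self); simp only: rels_explicit insert_iff simp_thms)
qed

lemma alg_iso_quot_H_subst_linear:
  assumes c: "c \<noteq> 0"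
  shows "alg_iso_quot (torsideal a1 a2 p1 p2)
           (torsideal (a1 / c) (a2 / c) (p1 \<circ>\<^sub>p [:d, c:]) (p2 \<circ>\<^sub>p [:d, c:]))"
proof -
  define q' where "q' = [:- d / c, 1 / c:]"
  have inverse: "[:d, c:] \<circ>\<^sub>p q' = [:0, 1:]" "q' \<circ>\<^sub>p [:d, c:] = [:0, 1:]"
    using c by (simp_all add: q'_def pcompose_linear)
  have "H_subst q' ` rels (a1 / c) (a2 / c) (p1 \<circ>\<^sub>p [:d, c:]) (p2 \<circ>\<^sub>p [:d, c:])
      \<subseteq> genideal FR (rels (a1 / c / (1 / c)) (a2 / c / (1 / c))
           (p1 \<circ>\<^sub>p [:d, c:] \<circ>\<^sub>p q') (p2 \<circ>\<^sub>p [:d, c:] \<circ>\<^sub>p q'))"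
    unfolding q'_def by (rule H_subst_linear_rels) (use c in simp)
  also have "\<dots> = genideal FR (rels a1 a2 p1 p2)"
    using c by (simp add: inverse flip: pcompose_assoc)
  finally have inverse_rels: "H_subst q' ` rels (a1 / c) (a2 / c) (p1 \<circ>\<^sub>p [:d, c:]) (p2 \<circ>\<^sub>p [:d, c:])
      \<subseteq> genideal FR (rels a1 a2 p1 p2)" .
  show ?thesis
    unfolding torsideal_eq
    by (rule alg_iso_quot_torsion_ideals[where q = "[:d, c:]" and q' = q',
          OF alg_endo_H_subst alg_endo_H_subst _ _ H_subst_linear_rels[OF c] inverse_rels])
       (simp_all add: H_subst_H_subst inverse H_subst_id, simp_all add: q'_def c)
qed

theorem mainTheorem14:
  fixes a1 a2 :: complex and p1 p2 :: "complex poly"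
  assumes "p1 \<noteq> 0" and "p2 \<noteq> 0"
  shows "alg_iso_quot (torsideal a1 a2 p1 p2) (torsideal a2 a1 p2 p1) \<and>
         (\<forall>\<gamma> \<gamma>0. \<gamma> \<noteq> 0 \<longrightarrow>
           alg_iso_quot (torsideal a1 a2 (p1 \<circ>\<^sub>p [:\<gamma>0, \<gamma>:]) (p2 \<circ>\<^sub>p [:\<gamma>0, \<gamma>:]))
                        (torsideal (\<gamma> * a1) (\<gamma> * a2) p1 p2))"
proof (intro conjI allI impI)
  show "alg_iso_quot (torsideal a1 a2 p1 p2) (torsideal a2 a1 p2 p1)"
    by (rule alg_iso_quot_swap_indices)
  fix \<gamma> \<gamma>0 :: complex
  assume \<gamma>: "\<gamma> \<noteq> 0"
  let ?\<psi> = "[:\<gamma>0, \<gamma>:]" and ?\<psi>' = "[:- \<gamma>0 / \<gamma>, 1 / \<gamma>:]"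
  have inverse: "p \<circ>\<^sub>p ?\<psi> \<circ>\<^sub>p ?\<psi>' = p" for p
    using \<gamma> by (simp add: pcompose_linear flip: pcompose_assoc)
  have scale: "x / (1 / \<gamma>) = \<gamma> * x" for x
    by simp
  have "alg_iso_quot (torsideal a1 a2 (p1 \<circ>\<^sub>p ?\<psi>) (p2 \<circ>\<^sub>p ?\<psi>))
      (torsideal (a1 / (1 / \<gamma>)) (a2 / (1 / \<gamma>)) (p1 \<circ>\<^sub>p ?\<psi> \<circ>\<^sub>p ?\<psi>') (p2 \<circ>\<^sub>p ?\<psi> \<circ>\<^sub>p ?\<psi>'))"
    by (rule alg_iso_quot_H_subst_linear) (use \<gamma> in simp)
  then show "alg_iso_quot (torsideal a1 a2 (p1 \<circ>\<^sub>p ?\<psi>) (p2 \<circ>\<^sub>p ?\<psi>))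
      (torsideal (\<gamma> * a1) (\<gamma> * a2) p1 p2)"
    by (simp only: inverse scale)
qed

end
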